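(* Let $\mathfrak{s}$ be a finite-dimensional real Lie algebra and let $J$ be an abelian complex structure on $\mathfrak{s}$. Then there exists an increasing sequence $\{0\}=\mathfrak{s}_0\subset\mathfrak{s}_1\subset\cdots\subset\mathfrak{s}_{r-1}\subset\mathfrak{s}_r=\mathfrak{s}$ of $J$-stable ideals of $\mathfrak{s}$ such that, for each $1\le j\le r$, the quotient $\mathfrak{s}_j/\mathfrak{s}_{j-1}$ (with the complex structure induced by $J$) is holomorphically isomorphic to a central extension of $\mathfrak{aff}(A_j)$, equipped with the abelian complex structure $J(a,b)=(b,-a)$, for some finite-dimensional real commutative associative algebra $A_j$. Here "central extension of $\mathfrak{aff}(A_j)$" means a Lie algebra $\mathfrak{h}$ with abelian complex structure $J_{\mathfrak h}$ whose center $\mathfrak{z}(\mathfrak h)$ is $J_{\mathfrak h}$-stable and such that $\mathfrak h/\mathfrak z(\mathfrak h)$ with the induced structure is holomorphically isomorphic to $\mathfrak{aff}(A_j)$.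
   Context: A complex structure on a real Lie algebra $\mathfrak g$ is a linear map $J:\mathfrak g\to\mathfrak g$ with $J^2=-\mathrm{Id}$ and $J[x,y]-[Jx,y]-[x,Jy]-J[Jx,Jy]=0$ for all $x,y\in\mathfrak g$. An abelian complex structure is a linear map $J$ with $J^2=-\mathrm{Id}$ and $[Jx,Jy]=[x,y]$ for all $x,y$ (such $J$ is automatically a complex structure). For a finite-dimensional real associative algebra $A$, $\mathfrak{aff}(A)$ is the Lie algebra $A\oplus A$ with bracket $[(a,b),(a',b')]=(aa'-a'a,\ ab'-a'b)$; when $A$ is commutative this is $[(a,b),(a',b')]=(0,ab'-a'b)$, and $J(a,b)=(b,-a)$ is an abelian complex structure on it. A holomorphic isomorphism between Lie algebras with complex structures $(\mathfrak g_1,J_1)$, $(\mathfrak g_2,J_2)$ is a Lie algebra isomorphism $f$ with $f\circ J_1=J_2\circ f$. A $J$-stable ideal $I$ gives an induced endomorphism on $\mathfrak s/I$. *)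

theory Defs
  imports "HOL-Analysis.Analysis"
begin

text \<open>All algebraic structures are given by carrier subspaces of a real vector space
  type together with operations; only their behaviour on the carrier matters.\<close>

definition linear_on :: "'a::real_vector set \<Rightarrow> ('a \<Rightarrow> 'b::real_vector) \<Rightarrow> bool" where
  "linear_on S f \<longleftrightarrow>
     (\<forall>x\<in>S. \<forall>y\<in>S. f (x + y) = f x + f y) \<and> (\<forall>x\<in>S. \<forall>c::real. f (c *\<^sub>R x) = c *\<^sub>R f x)"

definition bilinear_on :: "'a::real_vector set \<Rightarrow> ('a \<Rightarrow> 'a \<Rightarrow> 'a) \<Rightarrow> bool" where
  "bilinear_on S b \<longleftrightarrow>
     (\<forall>x\<in>S. \<forall>y\<in>S. \<forall>z\<in>S. \<forall>c::real.
        b (x + y) z = b x z + b y z \<and> b x (y + z) = b x y + b x z \<and>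
        b (c *\<^sub>R x) y = c *\<^sub>R b x y \<and> b x (c *\<^sub>R y) = c *\<^sub>R b x y)"

definition lie_algebra_on :: "'a::real_vector set \<Rightarrow> ('a \<Rightarrow> 'a \<Rightarrow> 'a) \<Rightarrow> bool" where
  "lie_algebra_on S br \<longleftrightarrow> subspace S \<and> bilinear_on S br \<and>
     (\<forall>x\<in>S. \<forall>y\<in>S. br x y \<in> S) \<and>
     (\<forall>x\<in>S. br x x = 0) \<and>
     (\<forall>x\<in>S. \<forall>y\<in>S. \<forall>z\<in>S. br x (br y z) + br y (br z x) + br z (br x y) = 0)"

definition abelian_cs_on :: "'a::real_vector set \<Rightarrow> ('a \<Rightarrow> 'a \<Rightarrow> 'a) \<Rightarrow> ('a \<Rightarrow> 'a) \<Rightarrow> bool" where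
  "abelian_cs_on S br J \<longleftrightarrow> (\<forall>x\<in>S. J x \<in> S) \<and> linear_on S J \<and>
     (\<forall>x\<in>S. J (J x) = - x) \<and> (\<forall>x\<in>S. \<forall>y\<in>S. br (J x) (J y) = br x y)"

definition ideal_on :: "'a::real_vector set \<Rightarrow> ('a \<Rightarrow> 'a \<Rightarrow> 'a) \<Rightarrow> 'a set \<Rightarrow> bool" where
  "ideal_on S br I \<longleftrightarrow> subspace I \<and> I \<subseteq> S \<and> (\<forall>x\<in>S. \<forall>y\<in>I. br x y \<in> I)"

definition center_on :: "'a::real_vector set \<Rightarrow> ('a \<Rightarrow> 'a \<Rightarrow> 'a) \<Rightarrow> 'a set" where
  "center_on S br = {x\<in>S. \<forall>y\<in>S. br x y = 0}"

text \<open>hol_quot_iso S I br J T brT JT f: f is a surjective linear map from S onto T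
  with kernel exactly I, which is a Lie algebra homomorphism and intertwines J with JT.
  (By the first isomorphism theorem, this says precisely that f induces a holomorphic
  isomorphism (S/I, induced J) \<cong> (T, JT).)\<close>
definition hol_quot_iso ::
  "'a::real_vector set \<Rightarrow> 'a set \<Rightarrow> ('a \<Rightarrow> 'a \<Rightarrow> 'a) \<Rightarrow> ('a \<Rightarrow> 'a)
   \<Rightarrow> 'b::real_vector set \<Rightarrow> ('b \<Rightarrow> 'b \<Rightarrow> 'b) \<Rightarrow> ('b \<Rightarrow> 'b) \<Rightarrow> ('a \<Rightarrow> 'b) \<Rightarrow> bool" where
  "hol_quot_iso S I br J T brT JT f \<longleftrightarrow>
     linear_on S f \<and> f ` S = T \<and> (\<forall>x\<in>S. f x = 0 \<longleftrightarrow> x \<in> I) \<and>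
     (\<forall>x\<in>S. \<forall>y\<in>S. f (br x y) = brT (f x) (f y)) \<and>
     (\<forall>x\<in>S. f (J x) = JT (f x))"

definition comm_assoc_alg_on :: "'a::real_vector set \<Rightarrow> ('a \<Rightarrow> 'a \<Rightarrow> 'a) \<Rightarrow> bool" where
  "comm_assoc_alg_on A m \<longleftrightarrow> subspace A \<and> bilinear_on A m \<and>
     (\<forall>x\<in>A. \<forall>y\<in>A. m x y \<in> A) \<and>
     (\<forall>x\<in>A. \<forall>y\<in>A. \<forall>z\<in>A. m (m x y) z = m x (m y z)) \<and>
     (\<forall>x\<in>A. \<forall>y\<in>A. m x y = m y x)"

definition aff_br :: "('a \<Rightarrow> 'a \<Rightarrow> 'a::real_vector) \<Rightarrow> 'a \<times> 'a \<Rightarrow> 'a \<times> 'a \<Rightarrow> 'a \<times> 'a" where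
  "aff_br m p q = (m (fst p) (fst q) - m (fst q) (fst p), m (fst p) (snd q) - m (fst q) (snd p))"

definition aff_J :: "'a::real_vector \<times> 'a \<Rightarrow> 'a \<times> 'a" where
  "aff_J p = (snd p, - fst p)"

definition central_ext_of_aff ::
  "'a::real_vector set \<Rightarrow> ('a \<Rightarrow> 'a \<Rightarrow> 'a) \<Rightarrow> ('a \<Rightarrow> 'a) \<Rightarrow> 'b::real_vector set \<Rightarrow> ('b \<Rightarrow> 'b \<Rightarrow> 'b) \<Rightarrow> bool" where
  "central_ext_of_aff H brH JH A m \<longleftrightarrow>
     JH ` center_on H brH \<subseteq> center_on H brH \<and>
     (\<exists>g. hol_quot_iso H (center_on H brH) brH JH (A \<times> A) (aff_br m) aff_J g)"

end

theory Submission
  imports Defs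
begin

(* Since J is abelian, the complexification of the Lie algebra is the sum of the two abelian
  subalgebras s^{1,0} and s^{0,1}, and such a Lie algebra is metabelian; hence the derived
  algebra D = [s,s] is abelian.  For an abelian ideal I, the product a b = [J a, b] makes I a
  commutative associative algebra and I + J I is a J-stable ideal.  If the centre of I + J I is
  trivial, the sum is direct and (b, a) \<mapsto> a + J b is a holomorphic isomorphism from aff(I) onto
  I + J I; otherwise that centre is a nonzero J-stable abelian ideal, i.e. a central extension
  of aff(0).  So every nonzero such Lie algebra has a nonzero J-stable ideal which is a central
  extension of some aff(A); the filtration follows by induction on the dimension, applied to
  the quotient by that ideal. *)

section \<open>Lie algebras on a carrier subspace\<close>

locale lie_alg =
  fixes S :: "'a::real_vector set" and br :: "'a \<Rightarrow> 'a \<Rightarrow> 'a"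
  assumes lie_algebra_on: "lie_algebra_on S br"
begin

lemma subspace_carrier: "subspace S"
  using lie_algebra_on by (simp add: lie_algebra_on_def)

lemma carrier_closed [simp]:
  "0 \<in> S"
  "x \<in> S \<Longrightarrow> y \<in> S \<Longrightarrow> x + y \<in> S"
  "x \<in> S \<Longrightarrow> y \<in> S \<Longrightarrow> x - y \<in> S"
  "x \<in> S \<Longrightarrow> - x \<in> S"
  "x \<in> S \<Longrightarrow> c *\<^sub>R x \<in> S"
  "x \<in> S \<Longrightarrow> y \<in> S \<Longrightarrow> br x y \<in> S"
  using subspace_carrier lie_algebra_on
  by (simp_all add: subspace_0 subspace_add subspace_diff subspace_neg subspace_scale lie_algebra_on_def)

lemma br_add_left: "x \<in> S \<Longrightarrow> y \<in> S \<Longrightarrow> z \<in> S \<Longrightarrow> br (x + y) z = br x z + br y z"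
  and br_add_right: "x \<in> S \<Longrightarrow> y \<in> S \<Longrightarrow> z \<in> S \<Longrightarrow> br x (y + z) = br x y + br x z"
  and br_scale_left: "x \<in> S \<Longrightarrow> y \<in> S \<Longrightarrow> br (c *\<^sub>R x) y = c *\<^sub>R br x y"
  and br_scale_right: "x \<in> S \<Longrightarrow> y \<in> S \<Longrightarrow> br x (c *\<^sub>R y) = c *\<^sub>R br x y"
  using lie_algebra_on unfolding lie_algebra_on_def bilinear_on_def by blast+

lemma br_self [simp]: "x \<in> S \<Longrightarrow> br x x = 0"
  and jacobi: "x \<in> S \<Longrightarrow> y \<in> S \<Longrightarrow> z \<in> S \<Longrightarrow> br x (br y z) + br y (br z x) + br z (br x y) = 0"
  using lie_algebra_on by (simp_all add: lie_algebra_on_def)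

lemma br_neg_left: "x \<in> S \<Longrightarrow> y \<in> S \<Longrightarrow> br (- x) y = - br x y"
  and br_neg_right: "x \<in> S \<Longrightarrow> y \<in> S \<Longrightarrow> br x (- y) = - br x y"
  using br_scale_left[of x y "-1"] br_scale_right[of x y "-1"] by simp_all

lemma br_zero_left [simp]: "y \<in> S \<Longrightarrow> br 0 y = 0"
  and br_zero_right [simp]: "y \<in> S \<Longrightarrow> br y 0 = 0"
  using br_scale_left[of 0 y 0] br_scale_right[of y 0 0] by simp_all

lemma br_diff_left: "x \<in> S \<Longrightarrow> y \<in> S \<Longrightarrow> z \<in> S \<Longrightarrow> br (x - y) z = br x z - br y z"
  and br_diff_right: "x \<in> S \<Longrightarrow> y \<in> S \<Longrightarrow> z \<in> S \<Longrightarrow> br x (y - z) = br x y - br x z"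
  using br_add_left[of x "- y" z] br_add_right[of x y "- z"] by (simp_all add: br_neg_left br_neg_right)

lemmas br_linear = br_add_left br_add_right br_scale_left br_scale_right
  br_neg_left br_neg_right br_diff_left br_diff_right

lemma br_anticomm:
  assumes "x \<in> S" "y \<in> S" shows "br x y = - br y x"
proof -
  have "br (x + y) (x + y) = br x x + br x y + (br y x + br y y)"
    using assms by (simp add: br_add_left br_add_right del: br_self)
  with assms show ?thesis by (simp add: eq_neg_iff_add_eq_0)
qed

lemma br_br_left: "x \<in> S \<Longrightarrow> y \<in> S \<Longrightarrow> z \<in> S \<Longrightarrow> br (br x y) z = br x (br y z) - br y (br x z)"
  using jacobi[of x y z] br_anticomm[of z "br x y"] br_anticomm[of z x] br_neg_right
  by (simp add: algebra_simps)

lemma br_br_diff: "p \<in> S \<Longrightarrow> q \<in> S \<Longrightarrow> s \<in> S \<Longrightarrow> br (br p q) s - br (br p s) q = br p (br q s)"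
  using br_br_left[of p q s] br_anticomm[of "br p s" q] by simp

lemma ideal_subset: "ideal_on S br K \<Longrightarrow> x \<in> K \<Longrightarrow> x \<in> S"
  by (auto simp: ideal_on_def)

lemma ideal_on_zero: "ideal_on S br {0}"
  by (simp add: ideal_on_def)

lemma lie_algebra_on_ideal:
  assumes K: "ideal_on S br K" shows "lie_algebra_on K br"
  unfolding lie_algebra_on_def bilinear_on_def
proof (intro conjI ballI allI)
  show "subspace K"
    using K by (simp add: ideal_on_def)
  fix x y z c assume "x \<in> K" "y \<in> K" "z \<in> K"
  then have S: "x \<in> S" "y \<in> S" "z \<in> S"
    using ideal_subset[OF K] by auto
  show "br x y \<in> K"
    using K S(1) \<open>y \<in> K\<close> by (simp add: ideal_on_def)
  show "br (x + y) z = br x z + br y z" "br x (y + z) = br x y + br x z"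
    "br (c *\<^sub>R x) y = c *\<^sub>R br x y" "br x (c *\<^sub>R y) = c *\<^sub>R br x y"
    "br x x = 0" "br x (br y z) + br y (br z x) + br z (br x y) = 0"
    using S by (simp_all add: br_linear jacobi)
qed

lemma ideal_on_center:
  assumes K: "ideal_on S br K" shows "ideal_on S br (center_on K br)"
proof -
  have KS: "\<And>x. x \<in> K \<Longrightarrow> x \<in> S" and SK: "subspace K"
    and br_K: "\<And>x y. x \<in> S \<Longrightarrow> y \<in> K \<Longrightarrow> br x y \<in> K"
    using K by (auto simp: ideal_on_def)
  have "subspace (center_on K br)"
    using SK KS by (auto simp: subspace_def center_on_def br_add_left br_scale_left)
  moreover have "br x z \<in> center_on K br" if "x \<in> S" "z \<in> center_on K br" for x z
  proof -
    have z: "z \<in> K" "\<And>k. k \<in> K \<Longrightarrow> br z k = 0"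
      using that(2) by (auto simp: center_on_def)
    have "br (br x z) k = 0" if "k \<in> K" for k
      using that \<open>x \<in> S\<close> z KS br_K by (simp add: br_br_left)
    then show ?thesis
      using br_K[OF that(1) z(1)] by (simp add: center_on_def)
  qed
  ultimately show ?thesis
    using KS by (auto simp: ideal_on_def center_on_def)
qed

lemma br_span_eq_0:
  assumes "G \<subseteq> S" "v \<in> S" "\<And>g. g \<in> G \<Longrightarrow> br g v = 0" "u \<in> span G"
  shows "br u v = 0"
proof -
  have "subspace {u \<in> S. br u v = 0}"
    using assms(2) by (auto simp: subspace_def br_add_left br_scale_left)
  then have "span G \<subseteq> {u \<in> S. br u v = 0}"
    using assms(1,3) by (intro span_minimal) auto
  then show ?thesis
    using assms(4) by blast
qed

definition derived :: "'a set" where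
  "derived = span {br x y |x y. x \<in> S \<and> y \<in> S}"

lemma derived_subset: "derived \<subseteq> S"
  unfolding derived_def by (rule span_minimal) (auto simp: subspace_carrier)

lemma br_in_derived: "x \<in> S \<Longrightarrow> y \<in> S \<Longrightarrow> br x y \<in> derived"
  unfolding derived_def by (rule span_base) blast

lemma ideal_on_derived: "ideal_on S br derived"
  using derived_subset br_in_derived by (auto simp: ideal_on_def derived_def)

end

section \<open>Abelian complex structures are metabelian\<close>

locale abelian_complex_lie = lie_alg +
  fixes J
  assumes abelian_cs_on: "abelian_cs_on S br J"
begin

lemma J_closed [simp]: "x \<in> S \<Longrightarrow> J x \<in> S"
  and J_add: "x \<in> S \<Longrightarrow> y \<in> S \<Longrightarrow> J (x + y) = J x + J y"
  and J_scale: "x \<in> S \<Longrightarrow> J (c *\<^sub>R x) = c *\<^sub>R J x"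
  and J_J [simp]: "x \<in> S \<Longrightarrow> J (J x) = - x"
  and br_J_J [simp]: "x \<in> S \<Longrightarrow> y \<in> S \<Longrightarrow> br (J x) (J y) = br x y"
  using abelian_cs_on by (simp_all add: abelian_cs_on_def linear_on_def)

lemma J_zero [simp]: "J 0 = 0"
  and J_neg: "x \<in> S \<Longrightarrow> J (- x) = - J x"
  using J_scale[of 0 0] J_scale[of x "-1"] by simp_all

lemma J_diff: "x \<in> S \<Longrightarrow> y \<in> S \<Longrightarrow> J (x - y) = J x - J y"
  using J_add[of x "- y"] by (simp add: J_neg)

lemmas J_linear = J_add J_scale J_neg J_diff

lemma br_J_left: "x \<in> S \<Longrightarrow> y \<in> S \<Longrightarrow> br (J x) y = - br x (J y)"
  using br_J_J[of "J x" y] by (simp add: br_neg_left)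

lemma br_J_right: "x \<in> S \<Longrightarrow> y \<in> S \<Longrightarrow> br x (J y) = - br (J x) y"
  by (simp add: br_J_left)

lemma br_J_comm: "x \<in> S \<Longrightarrow> y \<in> S \<Longrightarrow> br (J x) y = br (J y) x"
  using br_J_left br_anticomm[of x "J y"] by simp

(* With x^{1,0} = x - i J x and y^{0,1} = y + i J y in the complexification, one has
  [x^{1,0}, y^{0,1}] = (br10 x y)^{1,0} + (br01 x y)^{0,1}.  The lemmas up to metabelian are the
  real form of the proof that a sum of two abelian subalgebras is metabelian; br_br01_comm and
  br_br10_comm are the Jacobi identity combined with the commutativity of s^{1,0} and s^{0,1}. *)
definition br10 :: "'a \<Rightarrow> 'a \<Rightarrow> 'a" where
  "br10 x y = br x y + J (br x (J y))"

definition br01 :: "'a \<Rightarrow> 'a \<Rightarrow> 'a" where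
  "br01 x y = br x y - J (br x (J y))"

lemma br10_closed [simp]: "x \<in> S \<Longrightarrow> y \<in> S \<Longrightarrow> br10 x y \<in> S"
  and br01_closed [simp]: "x \<in> S \<Longrightarrow> y \<in> S \<Longrightarrow> br01 x y \<in> S"
  by (simp_all add: br10_def br01_def)

lemma J_br01: "x \<in> S \<Longrightarrow> y \<in> S \<Longrightarrow> J (br01 x y) = br01 x (J y)"
  by (simp add: br01_def J_linear br_neg_right)

lemma br10_J: "x \<in> S \<Longrightarrow> y \<in> S \<Longrightarrow> br10 x (J y) = - J (br10 x y)"
  by (simp add: br10_def J_linear br_neg_right)

lemma br_br01_comm:
  assumes "p \<in> S" "r \<in> S" "q \<in> S"
  shows "br p (br01 r q) = br r (br01 p q)"
proof -
  have expand: "br a (br01 b q) = br a (br b q) - br (J a) (br (J b) q)" if "a \<in> S" "b \<in> S" for a b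
    using that assms by (simp add: br01_def br_diff_right br_J_right br_neg_right)
  have "br p (br r q) - br r (br p q) = br (br p r) q"
    and "br (J p) (br (J r) q) - br (J r) (br (J p) q) = br (br p r) q"
    using br_br_left[of p r q] br_br_left[of "J p" "J r" q] assms by simp_all
  then show ?thesis
    using assms by (simp add: expand algebra_simps)
qed

lemma br_br10_comm:
  assumes "p \<in> S" "q \<in> S" "s \<in> S"
  shows "br (br10 p q) s = br (br10 p s) q"
proof -
  have expand: "br (br10 p b) c = br (br p b) c - br (br p (J b)) (J c)" if "b \<in> S" "c \<in> S" for b c
    using that assms by (simp add: br10_def br_add_left br_J_left)
  have "br (br p q) s - br (br p s) q = br p (br q s)"
    and "br (br p (J q)) (J s) - br (br p (J s)) (J q) = br p (br q s)"
    using br_br_diff[of p q s] br_br_diff[of p "J q" "J s"] assms by simp_all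
  then show ?thesis
    using assms by (simp add: expand algebra_simps)
qed

lemma br10_br01_comm:
  "p \<in> S \<Longrightarrow> r \<in> S \<Longrightarrow> q \<in> S \<Longrightarrow> br10 p (br01 r q) = br10 r (br01 p q)"
  by (simp add: br10_def J_br01 br_br01_comm[of p r])

lemma br01_br10_comm:
  assumes "p \<in> S" "q \<in> S" "s \<in> S"
  shows "br01 (br10 p q) s = br01 (br10 p s) q"
proof -
  have "br (br10 p q) (J s) = br (br10 p s) (J q)"
    using assms br_br10_comm[of p q "J s"] by (simp add: br10_J br_neg_left br_J_left)
  then show ?thesis
    using assms by (simp add: br01_def br_br10_comm[of p q s])
qed

lemma br_br10_br01_comm:
  assumes "p \<in> S" "q \<in> S" "r \<in> S" "s \<in> S"
  shows "br (br10 p q) (br01 r s) = br (br10 r s) (br01 p q)"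
proof -
  have swap_left: "br (br10 a b) (br01 c d) = br (br10 c b) (br01 a d)"
    if "a \<in> S" "b \<in> S" "c \<in> S" "d \<in> S" for a b c d
    using that br_br10_comm[of a b "br01 c d"] br_br10_comm[of c b "br01 a d"]
    by (simp add: br10_br01_comm[of a c d])
  have swap_right: "br (br10 a b) (br01 c d) = br (br10 a d) (br01 c b)"
    if "a \<in> S" "b \<in> S" "c \<in> S" "d \<in> S" for a b c d
    using that br_br01_comm[of "br10 a b" c d] br_br01_comm[of "br10 a d" c b]
    by (simp add: br01_br10_comm[of a b d])
  show ?thesis
    using assms swap_left[of p q r s] swap_right[of r q p s] by simp
qed

lemma br10_br01_antisymmetrization:
  assumes "x \<in> S" "y \<in> S" "x' \<in> S" "y' \<in> S"
  shows "br (br10 x y) (br01 x' y') - br (br10 x' y') (br01 x y)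
    = 2 *\<^sub>R (br (br x y) (br x' y') - br (br x (J y)) (br x' (J y')))"
proof -
  define u where "u = br x y"
  define v where "v = br x (J y)"
  define u' where "u' = br x' y'"
  define v' where "v' = br x' (J y')"
  have S: "u \<in> S" "v \<in> S" "u' \<in> S" "v' \<in> S"
    using assms by (simp_all add: u_def v_def u'_def v'_def)
  have "br u' u = - br u u'" "br v' v = - br v v'"
    "br (J v') u = - br u (J v')" "br u' (J v) = - br (J v) u'"
    using S by (simp_all add: br_anticomm[of u'] br_anticomm[of v'] br_anticomm[of "J v'"] br_anticomm[of u'])
  with S show ?thesis
    by (simp add: br10_def br01_def u_def[symmetric] v_def[symmetric] u'_def[symmetric] v'_def[symmetric]
        br_linear scaleR_2 algebra_simps)
qed

lemma metabelian:
  assumes "x \<in> S" "y \<in> S" "x' \<in> S" "y' \<in> S"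
  shows "br (br x y) (br x' y') = 0"
proof -
  have J_invariant: "br (br a b) (br c d) = br (br a (J b)) (br c (J d))"
    if "a \<in> S" "b \<in> S" "c \<in> S" "d \<in> S" for a b c d
    using br10_br01_antisymmetrization[OF that] br_br10_br01_comm[of a b c d] that by simp
  \<comment> \<open>swapping x' and y' flips the sign of the left side of J_invariant but not of its right side\<close>
  have "- br (br x y) (br x' y') = br (br x y) (br y' x')"
    using assms by (simp add: br_anticomm[of y'] br_neg_right)
  also have "\<dots> = br (br x (J y)) (br x' (J y'))"
    using J_invariant[of x y y' x'] assms by (simp add: br_J_right br_J_comm[of x'])
  also have "\<dots> = br (br x y) (br x' y')"
    using J_invariant[of x y x' y'] assms by simp
  finally show ?thesis
    by (metis neg_eq_iff_add_eq_0 scaleR_2 scaleR_eq_0_iff zero_neq_numeral)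
qed

lemma derived_abelian:
  assumes "u \<in> derived" "v \<in> derived" shows "br u v = 0"
proof -
  let ?G = "{br x y |x y. x \<in> S \<and> y \<in> S}"
  have G: "?G \<subseteq> S"
    by auto
  have v: "v \<in> S"
    using assms(2) derived_subset by blast
  have "br g v = 0" if "g \<in> ?G" for g
  proof -
    have "g \<in> S"
      using that by auto
    moreover have "br g' g = 0" if "g' \<in> ?G" for g'
      using that \<open>g \<in> ?G\<close> by (auto simp: metabelian)
    then have "br v g = 0"
      using br_span_eq_0[OF G \<open>g \<in> S\<close>] assms(2) unfolding derived_def by blast
    ultimately show ?thesis
      using v br_anticomm[of g v] by simp
  qed
  then show ?thesis
    using br_span_eq_0[OF G v] assms(1) unfolding derived_def by blast
qed

lemma J_stable_center:
  assumes "ideal_on S br K" "J ` K \<subseteq> K"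
  shows "J ` center_on K br \<subseteq> center_on K br"
  using assms ideal_subset[OF assms(1)] by (auto simp: center_on_def br_J_left)

lemma abelian_cs_on_J_stable:
  assumes "K \<subseteq> S" "J ` K \<subseteq> K" shows "abelian_cs_on K br J"
  using assms by (auto simp: abelian_cs_on_def linear_on_def J_add J_scale subsetD[OF assms(1)])

end

section \<open>Ideals that are central extensions of aff(A)\<close>

definition aff_factor ::
  "'a::real_vector set \<Rightarrow> 'a set \<Rightarrow> ('a \<Rightarrow> 'a \<Rightarrow> 'a) \<Rightarrow> ('a \<Rightarrow> 'a) \<Rightarrow> bool" where
  "aff_factor T T' br J \<longleftrightarrow> (\<exists>(H::'a set) brH JH (A::'a set) m f.
     lie_algebra_on H brH \<and> abelian_cs_on H brH JH \<and> comm_assoc_alg_on A m \<and>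
     central_ext_of_aff H brH JH A m \<and> hol_quot_iso T T' br J H brH JH f)"

lemma comm_assoc_alg_on_zero: "comm_assoc_alg_on {0} (\<lambda>_ _. 0)"
  by (simp add: comm_assoc_alg_on_def bilinear_on_def)

lemma central_ext_of_aff_zero_if_abelian:
  assumes "subspace K" "J ` K \<subseteq> K" "\<And>x y. x \<in> K \<Longrightarrow> y \<in> K \<Longrightarrow> br x y = 0"
  shows "central_ext_of_aff K br J {0::'b::real_vector} (\<lambda>_ _. 0)"
proof -
  have "center_on K br = K"
    using assms(3) by (auto simp: center_on_def)
  moreover have "K \<noteq> {}"
    using assms(1) subspace_0 by blast
  ultimately show ?thesis
    using assms(2)
    by (auto simp: central_ext_of_aff_def hol_quot_iso_def linear_on_def aff_br_def aff_J_def
        zero_prod_def intro!: exI[of _ "\<lambda>_. 0"])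
qed

lemma hol_quot_iso_inv_into:
  assumes P: "subspace P" and h: "linear_on P h" "inj_on h P" "h ` P = K"
    and br_h: "\<And>q q'. q \<in> P \<Longrightarrow> q' \<in> P \<Longrightarrow> brP q q' \<in> P \<and> br (h q) (h q') = h (brP q q')"
    and J_h: "\<And>q. q \<in> P \<Longrightarrow> JP q \<in> P \<and> J (h q) = h (JP q)"
  shows "hol_quot_iso K {0} br J P brP JP (inv_into P h)"
proof -
  have g_h: "inv_into P h (h q) = q" if "q \<in> P" for q
    using h(2) that by (rule inv_into_f_f)
  have h_0: "h 0 = 0"
    using h(1) P subspace_0 by (metis linear_on_def scale_zero_left)
  have h_add: "h (q + q') = h q + h q'" and h_scale: "h (c *\<^sub>R q) = c *\<^sub>R h q"
    if "q \<in> P" "q' \<in> P" for q q' c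
    using h(1) that by (simp_all add: linear_on_def)
  have "linear_on K (inv_into P h)"
    unfolding linear_on_def
  proof (intro conjI ballI allI)
    fix x y c assume "x \<in> K" "y \<in> K"
    then obtain q q' where q: "q \<in> P" "q' \<in> P" and xy: "x = h q" "y = h q'"
      using h(3) by blast
    show "inv_into P h (x + y) = inv_into P h x + inv_into P h y"
      using q P by (simp add: xy g_h subspace_add flip: h_add)
    show "inv_into P h (c *\<^sub>R x) = c *\<^sub>R inv_into P h x"
      using q P by (simp add: xy g_h subspace_scale flip: h_scale)
  qed
  moreover have "inv_into P h ` K = P"
    using h(2,3) inv_into_image_cancel by blast
  moreover have "inv_into P h x = 0 \<longleftrightarrow> x \<in> {0}"
    and "inv_into P h (br x y) = brP (inv_into P h x) (inv_into P h y)"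
    and "inv_into P h (J x) = JP (inv_into P h x)"
    if xy_K: "x \<in> K" "y \<in> K" for x y
  proof -
    obtain q q' where q: "q \<in> P" "q' \<in> P" and xy: "x = h q" "y = h q'"
      using h(3) xy_K by blast
    show "inv_into P h x = 0 \<longleftrightarrow> x \<in> {0}"
      using q h(2) h_0 subspace_0[OF P] by (auto simp: xy g_h inj_on_def)
    show "inv_into P h (br x y) = brP (inv_into P h x) (inv_into P h y)"
      using q br_h[OF q] by (simp add: xy g_h)
    show "inv_into P h (J x) = JP (inv_into P h x)"
      using q J_h[OF q(1)] by (simp add: xy g_h)
  qed
  ultimately show ?thesis
    by (auto simp: hol_quot_iso_def)
qed

definition J_span :: "('a::real_vector \<Rightarrow> 'a) \<Rightarrow> 'a set \<Rightarrow> 'a set" where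
  "J_span J I = {a + J b |a b. a \<in> I \<and> b \<in> I}"

lemma J_spanI: "a \<in> I \<Longrightarrow> b \<in> I \<Longrightarrow> a + J b \<in> J_span J I"
  by (auto simp: J_span_def)

lemma J_spanE:
  assumes "x \<in> J_span J I"
  obtains a b where "a \<in> I" "b \<in> I" "x = a + J b"
  using assms by (auto simp: J_span_def)

context abelian_complex_lie
begin

lemma aff_factor_ideal:
  fixes A :: "'a set"
  assumes "ideal_on S br K" "J ` K \<subseteq> K" "comm_assoc_alg_on A m" "central_ext_of_aff K br J A m"
  shows "aff_factor K {0} br J"
proof -
  have "hol_quot_iso K {0} br J K br J (\<lambda>x. x)"
    by (simp add: hol_quot_iso_def linear_on_def)
  moreover have "lie_algebra_on K br" "abelian_cs_on K br J"
    using assms(1,2) lie_algebra_on_ideal abelian_cs_on_J_stable by (auto simp: ideal_on_def)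
  ultimately show ?thesis
    using assms(3,4) unfolding aff_factor_def by blast
qed

lemma aff_factor_if_abelian:
  assumes "ideal_on S br K" "J ` K \<subseteq> K" "\<And>x y. x \<in> K \<Longrightarrow> y \<in> K \<Longrightarrow> br x y = 0"
  shows "aff_factor K {0} br J"
  using assms comm_assoc_alg_on_zero
    central_ext_of_aff_zero_if_abelian[of K J br, where 'b='a]
  by (auto simp: ideal_on_def intro: aff_factor_ideal)

lemma J_span_subset: "I \<subseteq> S \<Longrightarrow> J_span J I \<subseteq> S"
  by (auto simp: J_span_def subsetD)

lemma subset_J_span: "subspace I \<Longrightarrow> I \<subseteq> J_span J I"
  unfolding J_span_def using subspace_0 by force

lemma J_stable_J_span:
  assumes "subspace I" "I \<subseteq> S" shows "J ` J_span J I \<subseteq> J_span J I"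
proof
  fix x assume "x \<in> J ` J_span J I"
  then obtain a b where ab: "a \<in> I" "b \<in> I" "x = J (a + J b)"
    by (auto elim: J_spanE)
  then have "x = - b + J a"
    by (simp add: J_add subsetD[OF assms(2)])
  then show "x \<in> J_span J I"
    using ab J_spanI subspace_neg[OF assms(1)] by metis
qed

lemma ideal_on_J_span:
  assumes I: "ideal_on S br I" shows "ideal_on S br (J_span J I)"
proof -
  have SI: "subspace I" and IS: "I \<subseteq> S" and br_I: "\<And>x y. x \<in> S \<Longrightarrow> y \<in> I \<Longrightarrow> br x y \<in> I"
    using I by (auto simp: ideal_on_def)
  have "subspace (J_span J I)"
    unfolding subspace_def
  proof (intro conjI ballI allI)
    show "0 \<in> J_span J I"
      using subset_J_span[OF SI] SI subspace_0 by blast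
    fix x y c assume "x \<in> J_span J I" "y \<in> J_span J I"
    then obtain a b a' b' where ab: "a \<in> I" "b \<in> I" "a' \<in> I" "b' \<in> I"
      and xy: "x = a + J b" "y = a' + J b'"
      by (metis J_spanE)
    have "x + y = (a + a') + J (b + b')" "c *\<^sub>R x = c *\<^sub>R a + J (c *\<^sub>R b)"
      using ab by (auto simp: xy J_add J_scale scaleR_add_right subsetD[OF IS])
    then show "x + y \<in> J_span J I" "c *\<^sub>R x \<in> J_span J I"
      using ab SI J_spanI subspace_add subspace_scale by metis+
  qed
  moreover have "br x y \<in> J_span J I" if x: "x \<in> S" and y: "y \<in> J_span J I" for x y
  proof -
    obtain a b where ab: "a \<in> I" "b \<in> I" "y = a + J b"
      using y by (rule J_spanE)
    then have "br x y = (br x a - br (J x) b) + J 0"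
      using x by (auto simp: br_add_right br_J_right subsetD[OF IS])
    moreover have "br x a - br (J x) b \<in> I"
      using ab x br_I[of x a] br_I[of "J x" b] subspace_diff[OF SI] by simp
    ultimately show ?thesis
      using SI subspace_0 J_spanI by metis
  qed
  ultimately show ?thesis
    using J_span_subset[OF IS] by (simp add: ideal_on_def)
qed

lemma comm_assoc_alg_on_abelian_ideal:
  assumes I: "ideal_on S br I" and abelian: "\<And>a b. a \<in> I \<Longrightarrow> b \<in> I \<Longrightarrow> br a b = 0"
  shows "comm_assoc_alg_on I (\<lambda>a b. br (J a) b)"
proof -
  have SI: "subspace I" and IS: "\<And>a. a \<in> I \<Longrightarrow> a \<in> S"
    and br_I: "\<And>x a. x \<in> S \<Longrightarrow> a \<in> I \<Longrightarrow> br x a \<in> I"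
    using I by (auto simp: ideal_on_def)
  have comm: "br (J a) b = br (J b) a" if "a \<in> I" "b \<in> I" for a b
    using that by (simp add: IS br_J_comm)
  have swap: "br (J a) (br (J b) c) = br (J b) (br (J a) c)" if "a \<in> I" "b \<in> I" "c \<in> I" for a b c
    using that br_br_left[of "J a" "J b" c] abelian[of a b] by (simp add: IS)
  show ?thesis
    unfolding comm_assoc_alg_on_def bilinear_on_def
  proof (intro conjI ballI allI)
    fix a b c x assume abc: "a \<in> I" "b \<in> I" "c \<in> I"
    show "br (J (a + b)) c = br (J a) c + br (J b) c" "br (J a) (b + c) = br (J a) b + br (J a) c"
      "br (J (x *\<^sub>R a)) b = x *\<^sub>R br (J a) b" "br (J a) (x *\<^sub>R b) = x *\<^sub>R br (J a) b"
      using abc by (simp_all add: IS J_linear br_linear)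
    show "br (J a) b \<in> I"
      using abc by (simp add: IS br_I)
    show "br (J a) b = br (J b) a"
      by (rule comm[OF abc(1,2)])
    have "br (J (br (J a) b)) c = br (J c) (br (J a) b)"
      using abc comm[of "br (J a) b" c] by (simp add: IS br_I)
    also have "\<dots> = br (J a) (br (J c) b)"
      using abc by (simp add: swap)
    also have "\<dots> = br (J a) (br (J b) c)"
      using abc comm[of c b] by simp
    finally show "br (J (br (J a) b)) c = br (J a) (br (J b) c)" .
  qed (use SI in simp)
qed

lemma J_span_direct:
  assumes I: "ideal_on S br I" and abelian: "\<And>a b. a \<in> I \<Longrightarrow> b \<in> I \<Longrightarrow> br a b = 0"
    and center: "center_on (J_span J I) br = {0}"
    and t: "t \<in> I" "J t \<in> I"
  shows "t = 0"
proof -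
  have SI: "subspace I" and IS: "\<And>a. a \<in> I \<Longrightarrow> a \<in> S"
    using I by (auto simp: ideal_on_def)
  have "br (J t) y = 0" if y: "y \<in> J_span J I" for y
  proof -
    obtain a b where ab: "a \<in> I" "b \<in> I" "y = a + J b"
      using y by (rule J_spanE)
    then show ?thesis
      using t abelian[of "J t" a] abelian[of t b] by (simp add: IS br_add_right)
  qed
  then have "J t \<in> center_on (J_span J I) br"
    using t subset_J_span[OF SI] by (auto simp: center_on_def)
  then have "J (J t) = 0"
    using center by simp
  then show ?thesis
    using t by (simp add: IS)
qed

lemma central_ext_of_aff_J_span:
  assumes I: "ideal_on S br I" and abelian: "\<And>a b. a \<in> I \<Longrightarrow> b \<in> I \<Longrightarrow> br a b = 0"
    and center: "center_on (J_span J I) br = {0}"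
  shows "central_ext_of_aff (J_span J I) br J I (\<lambda>a b. br (J a) b)"
proof -
  have SI: "subspace I" and IS: "\<And>a. a \<in> I \<Longrightarrow> a \<in> S"
    and br_I: "\<And>x a. x \<in> S \<Longrightarrow> a \<in> I \<Longrightarrow> br x a \<in> I"
    using I by (auto simp: ideal_on_def)
  define h where "h q = snd q + J (fst q)" for q :: "'a \<times> 'a"
  have P: "subspace (I \<times> I)"
    using SI by (rule subspace_Times[OF _ SI])
  have "linear_on (I \<times> I) h"
    by (auto simp: linear_on_def h_def IS J_linear scaleR_add_right)
  moreover have "inj_on h (I \<times> I)"
  proof (rule inj_onI)
    fix q q' assume "q \<in> I \<times> I" "q' \<in> I \<times> I" and h_eq: "h q = h q'"
    then obtain b a b' a' where q: "q = (b, a)" "q' = (b', a')"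
      and I4: "a \<in> I" "b \<in> I" "a' \<in> I" "b' \<in> I"
      by auto
    have "a + J b = a' + J b'"
      using h_eq by (simp add: h_def q)
    then have "a - a' = J (b' - b)"
      by (simp add: IS I4 J_diff algebra_simps)
    moreover have "a - a' \<in> I" "b' - b \<in> I"
      using I4 SI subspace_diff by blast+
    ultimately have "b' - b = 0"
      by (metis J_span_direct[OF I abelian center])
    with \<open>a - a' = J (b' - b)\<close> show "q = q'"
      by (simp add: q)
  qed
  moreover have "h ` (I \<times> I) = J_span J I"
    by (force simp: h_def J_span_def)
  moreover have "aff_br (\<lambda>a b. br (J a) b) q q' \<in> I \<times> I
      \<and> br (h q) (h q') = h (aff_br (\<lambda>a b. br (J a) b) q q')"
    if qP: "q \<in> I \<times> I" "q' \<in> I \<times> I" for q q'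
  proof -
    obtain b a b' a' where q: "q = (b, a)" "q' = (b', a')"
      and I4: "a \<in> I" "b \<in> I" "a' \<in> I" "b' \<in> I"
      using qP by auto
    have "aff_br (\<lambda>a b. br (J a) b) q q' = (0, br (J b) a' - br (J b') a)"
      using I4 br_J_comm[of b b'] by (simp add: q aff_br_def IS)
    moreover have "br (h q) (h q') = br (J b) a' - br (J b') a"
      using I4 abelian[of a a'] abelian[of b b'] br_anticomm[of a "J b'"]
      by (simp add: q h_def IS br_linear)
    ultimately show ?thesis
      using I4 br_I SI by (simp add: h_def IS subspace_0 subspace_diff)
  qed
  moreover have "aff_J q \<in> I \<times> I \<and> J (h q) = h (aff_J q)" if "q \<in> I \<times> I" for q
    using that SI by (auto simp: aff_J_def h_def IS J_add subspace_neg)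
  ultimately have "hol_quot_iso (J_span J I) {0} br J (I \<times> I) (aff_br (\<lambda>a b. br (J a) b)) aff_J
      (inv_into (I \<times> I) h)"
    by (intro hol_quot_iso_inv_into[OF P])
  then show ?thesis
    using center by (auto simp: central_ext_of_aff_def)
qed

lemma exists_aff_ideal:
  assumes "S \<noteq> {0}"
  shows "\<exists>K. K \<noteq> {0} \<and> ideal_on S br K \<and> J ` K \<subseteq> K \<and> aff_factor K {0} br J"
proof (cases "\<forall>x\<in>S. \<forall>y\<in>S. br x y = 0")
  case True
  have S: "ideal_on S br S" "J ` S \<subseteq> S"
    by (auto simp: ideal_on_def subspace_carrier)
  moreover have "aff_factor S {0} br J"
    using aff_factor_if_abelian[OF S] True by blast
  ultimately show ?thesis
    using assms by blast
next
  case False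
  then obtain x y where xy: "x \<in> S" "y \<in> S" "br x y \<noteq> 0"
    by blast
  define K where "K = J_span J derived"
  have K: "ideal_on S br K" "J ` K \<subseteq> K"
    using ideal_on_J_span[OF ideal_on_derived] J_stable_J_span[OF _ derived_subset] ideal_on_derived
    by (auto simp: K_def ideal_on_def)
  show ?thesis
  proof (cases "center_on K br = {0}")
    case True
    have "br x y \<in> K"
      using br_in_derived[OF xy(1,2)] subset_J_span ideal_on_derived by (auto simp: K_def ideal_on_def)
    then have "K \<noteq> {0}"
      using xy(3) by blast
    moreover have "aff_factor K {0} br J"
      using True derived_abelian
      by (auto simp: K_def intro!: aff_factor_ideal[OF K[unfolded K_def]] comm_assoc_alg_on_abelian_ideal
          central_ext_of_aff_J_span ideal_on_derived)
    ultimately show ?thesis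
      using K by blast
  next
    case False
    have "ideal_on S br (center_on K br)" "J ` center_on K br \<subseteq> center_on K br"
      using K ideal_on_center J_stable_center by auto
    moreover have "br z z' = 0" if "z \<in> center_on K br" "z' \<in> center_on K br" for z z'
      using that by (auto simp: center_on_def)
    ultimately have "aff_factor (center_on K br) {0} br J"
      by (rule aff_factor_if_abelian)
    with False \<open>ideal_on S br (center_on K br)\<close> \<open>J ` center_on K br \<subseteq> center_on K br\<close>
    show ?thesis
      by blast
  qed
qed

end

section \<open>Quotients\<close>

(* The quotient by a J-stable ideal K is realised inside S as the image p ` S of the orthogonal
  projection p onto the orthogonal complement of K. *)
lemma complement_projection_exists:
  fixes K :: "'a::euclidean_space set"
  assumes K: "subspace K"
  obtains p where "linear p" "\<And>x. x - p x \<in> K" "\<And>x. x \<in> K \<Longrightarrow> p x = 0"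
proof -
  have "\<exists>w. w \<in> K\<^sup>\<bottom> \<and> x - w \<in> K" for x
  proof -
    have "x \<in> K + K\<^sup>\<bottom>"
      using subspace_sum_orthogonal_comp[OF K] by simp
    then obtain u w where "x = u + w" "u \<in> K" "w \<in> K\<^sup>\<bottom>"
      by (rule set_plus_elim)
    then show ?thesis
      by force
  qed
  then obtain p where p_perp: "\<And>x. p x \<in> K\<^sup>\<bottom>" and p_diff: "\<And>x. x - p x \<in> K"
    by metis
  have unique: "p x = w" if "w \<in> K\<^sup>\<bottom>" "x - w \<in> K" for x w
  proof -
    have "p x - w = (x - w) - (x - p x)"
      by simp
    then have "p x - w \<in> K \<inter> K\<^sup>\<bottom>"
      using that p_perp p_diff K subspace_orthogonal_comp by (metis IntI subspace_diff)
    then show ?thesis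
      using orthogonal_Int_0[OF K] by simp
  qed
  have "linear p"
  proof (rule linearI)
    fix x y and c :: real
    have "(x + y) - (p x + p y) = (x - p x) + (y - p y)" "c *\<^sub>R x - c *\<^sub>R p x = c *\<^sub>R (x - p x)"
      by (simp_all add: algebra_simps)
    then show "p (x + y) = p x + p y" "p (c *\<^sub>R x) = c *\<^sub>R p x"
      using p_perp p_diff K subspace_orthogonal_comp
      by (metis unique subspace_add subspace_scale)+
  qed
  moreover have "p x = 0" if "x \<in> K" for x
    using unique[of 0 x] that subspace_orthogonal_comp subspace_0 by fastforce
  ultimately show ?thesis
    using that p_diff by blast
qed

locale abelian_complex_lie_quotient = abelian_complex_lie +
  fixes K and p :: "'a \<Rightarrow> 'a"
  assumes ideal: "ideal_on S br K" and J_stable: "J ` K \<subseteq> K"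
    and linear_p: "linear p" and residue_in_K: "\<And>x. x - p x \<in> K"
    and p_kernel: "\<And>x. x \<in> K \<Longrightarrow> p x = 0"
begin

definition quot :: "'a set" where "quot = p ` S"

definition quot_br :: "'a \<Rightarrow> 'a \<Rightarrow> 'a" where "quot_br u v = p (br u v)"

definition quot_J :: "'a \<Rightarrow> 'a" where "quot_J u = p (J u)"

lemma p_add: "p (x + y) = p x + p y" and p_scale: "p (c *\<^sub>R x) = c *\<^sub>R p x"
  and p_diff: "p (x - y) = p x - p y" and p_zero: "p 0 = 0"
  using linear_p by (simp_all add: linear_add linear_scale linear_diff linear_0)

lemma p_eq: "x - y \<in> K \<Longrightarrow> p x = p y"
  using p_kernel[of "x - y"] by (simp add: p_diff)

lemma p_p: "p (p x) = p x"
  using p_eq[of x "p x"] residue_in_K by simp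

lemma p_eq_0_iff: "p x = 0 \<longleftrightarrow> x \<in> K"
  using p_kernel residue_in_K[of x] by auto

lemma p_closed: "x \<in> S \<Longrightarrow> p x \<in> S"
  using carrier_closed(3)[OF _ ideal_subset[OF ideal residue_in_K[of x]], of x] by simp

lemma p_br:
  assumes "x \<in> S" "y \<in> S" shows "p (br x y) = p (br (p x) (p y))"
proof (rule p_eq)
  have K: "x - p x \<in> K" "y - p y \<in> K" "x - p x \<in> S" "y - p y \<in> S"
    using residue_in_K ideal_subset[OF ideal] by auto
  have "br x y - br (p x) (p y) = - br y (x - p x) + br (p x) (y - p y)"
    using assms K br_anticomm[of x y] br_anticomm[of "p x" y]
    by (simp add: p_closed br_diff_left br_diff_right)
  also have "\<dots> \<in> K"
    using ideal K assms p_closed subspace_neg subspace_add by (metis ideal_on_def)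
  finally show "br x y - br (p x) (p y) \<in> K" .
qed

lemma p_J: "x \<in> S \<Longrightarrow> p (J x) = p (J (p x))"
  using J_stable residue_in_K[of x] ideal_subset[OF ideal residue_in_K[of x]] by (intro p_eq) (auto simp: p_closed simp flip: J_diff)

lemma quot_subset: "quot \<subseteq> S"
  by (auto simp: quot_def p_closed)

lemma p_quot: "u \<in> quot \<Longrightarrow> p u = u"
  by (auto simp: quot_def p_p)

lemma hol_quot_iso_quot: "hol_quot_iso S K br J quot quot_br quot_J p"
  by (simp add: hol_quot_iso_def linear_on_def quot_def quot_br_def quot_J_def p_add p_scale p_eq_0_iff
      p_br p_J p_closed)

lemma p_br_p: "x \<in> S \<Longrightarrow> y \<in> S \<Longrightarrow> p (br x (p y)) = p (br x y)"
  using p_br[of x "p y"] p_br[of x y] by (simp add: p_closed p_p)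

lemma lie_algebra_on_quot: "lie_algebra_on quot quot_br"
  unfolding lie_algebra_on_def bilinear_on_def
proof (intro conjI ballI allI)
  show "subspace quot"
    unfolding quot_def by (rule linear_subspace_image[OF linear_p subspace_carrier])
  fix u v w c assume "u \<in> quot" "v \<in> quot" "w \<in> quot"
  then have S: "u \<in> S" "v \<in> S" "w \<in> S"
    using quot_subset by auto
  show "quot_br u v \<in> quot"
    using S by (simp add: quot_def quot_br_def)
  show "quot_br u u = 0"
    using S by (simp add: quot_br_def p_zero)
  show "quot_br (u + v) w = quot_br u w + quot_br v w" "quot_br u (v + w) = quot_br u v + quot_br u w"
    "quot_br (c *\<^sub>R u) v = c *\<^sub>R quot_br u v" "quot_br u (c *\<^sub>R v) = c *\<^sub>R quot_br u v"
    using S by (simp_all add: quot_br_def br_linear p_add p_scale)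
  show "quot_br u (quot_br v w) + quot_br v (quot_br w u) + quot_br w (quot_br u v) = 0"
    using S jacobi[of u v w] by (simp add: quot_br_def p_br_p flip: p_add) (simp add: p_zero)
qed

lemma abelian_cs_on_quot: "abelian_cs_on quot quot_br quot_J"
  unfolding abelian_cs_on_def linear_on_def
proof (intro conjI ballI allI)
  fix u v c assume uv: "u \<in> quot" "v \<in> quot"
  then have S: "u \<in> S" "v \<in> S"
    using quot_subset by auto
  show "quot_J u \<in> quot"
    using S by (simp add: quot_def quot_J_def)
  show "quot_J (u + v) = quot_J u + quot_J v" "quot_J (c *\<^sub>R u) = c *\<^sub>R quot_J u"
    using S by (simp_all add: quot_J_def J_linear p_add p_scale)
  show "quot_J (quot_J u) = - u"
    using S p_J[of "J u"] p_scale[of "-1" u] p_quot[OF uv(1)] by (simp add: quot_J_def)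
  show "quot_br (quot_J u) (quot_J v) = quot_br u v"
    using S p_br[of "J u" "J v"] by (simp add: quot_br_def quot_J_def)
qed

lemma quot_psubset:
  assumes "K \<noteq> {0}" shows "quot \<subset> S"
proof -
  obtain k where k: "k \<in> K" "k \<noteq> 0"
    using assms ideal subspace_0 by (auto simp: ideal_on_def)
  have "k \<notin> quot"
    using k p_quot p_kernel by fastforce
  then show ?thesis
    using quot_subset ideal_subset[OF ideal k(1)] by blast
qed

end

section \<open>The filtration\<close>

definition aff_series :: "'a::real_vector set \<Rightarrow> ('a \<Rightarrow> 'a \<Rightarrow> 'a) \<Rightarrow> ('a \<Rightarrow> 'a)
    \<Rightarrow> nat \<Rightarrow> (nat \<Rightarrow> 'a set) \<Rightarrow> bool" where
  "aff_series S br J r s \<longleftrightarrow> s 0 = {0} \<and> s r = S \<and> (\<forall>j<r. s j \<subset> s (Suc j)) \<and>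
     (\<forall>j\<le>r. ideal_on S br (s j) \<and> J ` s j \<subseteq> s j) \<and>
     (\<forall>j\<in>{1..r}. aff_factor (s j) (s (j - 1)) br J)"

lemma hol_quot_iso_comp:
  assumes p: "hol_quot_iso S K br J Q brQ JQ p" and f: "hol_quot_iso T T' brQ JQ H brH JH f"
    and "T \<subseteq> Q"
  shows "hol_quot_iso {x \<in> S. p x \<in> T} {x \<in> S. p x \<in> T'} br J H brH JH (f \<circ> p)"
proof -
  have pT: "p ` {x \<in> S. p x \<in> T} = T" and fT: "f ` T = H"
    using p f \<open>T \<subseteq> Q\<close> by (auto simp: hol_quot_iso_def)
  have "(f \<circ> p) ` {x \<in> S. p x \<in> T} = H"
    by (simp only: image_comp[symmetric] pT fT)
  with p f show ?thesis
    by (simp add: hol_quot_iso_def linear_on_def)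
qed

lemma aff_factor_preimage:
  fixes S Q :: "'a::real_vector set"
  assumes "hol_quot_iso S K br J Q brQ JQ p" "T \<subseteq> Q" "aff_factor T T' brQ JQ"
  shows "aff_factor {x \<in> S. p x \<in> T} {x \<in> S. p x \<in> T'} br J"
proof -
  obtain H :: "'a set" and brH JH and A :: "'a set" and m f
    where H: "lie_algebra_on H brH" "abelian_cs_on H brH JH" "comm_assoc_alg_on A m"
      "central_ext_of_aff H brH JH A m" "hol_quot_iso T T' brQ JQ H brH JH f"
    using assms(3) unfolding aff_factor_def by blast
  then show ?thesis
    unfolding aff_factor_def using hol_quot_iso_comp[OF assms(1) H(5) assms(2)] by blast
qed

context abelian_complex_lie
begin

lemma ideal_on_preimage:
  assumes p: "hol_quot_iso S K br J Q brQ JQ p" and T: "ideal_on Q brQ T" "JQ ` T \<subseteq> T"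
  shows "ideal_on S br {x \<in> S. p x \<in> T} \<and> J ` {x \<in> S. p x \<in> T} \<subseteq> {x \<in> S. p x \<in> T}"
proof -
  have p_add: "\<And>x y. x \<in> S \<Longrightarrow> y \<in> S \<Longrightarrow> p (x + y) = p x + p y"
    and p_scale: "\<And>x c. x \<in> S \<Longrightarrow> p (c *\<^sub>R x) = c *\<^sub>R p x"
    and p_S: "p ` S = Q"
    and p_br: "\<And>x y. x \<in> S \<Longrightarrow> y \<in> S \<Longrightarrow> p (br x y) = brQ (p x) (p y)"
    and p_J: "\<And>x. x \<in> S \<Longrightarrow> p (J x) = JQ (p x)"
    using p by (auto simp: hol_quot_iso_def linear_on_def)
  have "subspace {x \<in> S. p x \<in> T}"
    using T(1) p_scale[of 0 0] by (auto simp: subspace_def ideal_on_def p_add p_scale)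
  moreover have "p (br x y) \<in> T" if "x \<in> S" "y \<in> S" "p y \<in> T" for x y
    using that T(1) p_S p_br by (auto simp: ideal_on_def)
  ultimately show ?thesis
    using T(2) p_J by (auto simp: ideal_on_def)
qed

lemma aff_series_lift:
  fixes Q :: "'a set"
  assumes p: "hol_quot_iso S K br J Q brQ JQ p"
    and K: "K \<noteq> {0}" "ideal_on S br K" "aff_factor K {0} br J"
    and t: "aff_series Q brQ JQ r t"
  shows "aff_series S br J (Suc r) (\<lambda>j. if j = 0 then {0} else {x \<in> S. p x \<in> t (j - 1)})"
    (is "aff_series S br J (Suc r) ?s")
proof -
  have p_S: "p ` S = Q" and p_0: "\<And>x. x \<in> S \<Longrightarrow> p x = 0 \<longleftrightarrow> x \<in> K"
    using p by (auto simp: hol_quot_iso_def)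
  have t0: "t 0 = {0}" and tr: "t r = Q" and t_strict: "\<And>j. j < r \<Longrightarrow> t j \<subset> t (Suc j)"
    and t_ideal: "\<And>j. j \<le> r \<Longrightarrow> ideal_on Q brQ (t j) \<and> JQ ` t j \<subseteq> t j"
    and t_factor: "\<And>j. j \<in> {1..r} \<Longrightarrow> aff_factor (t j) (t (j - 1)) brQ JQ"
    using t by (auto simp: aff_series_def)
  have t_Q: "j \<le> r \<Longrightarrow> t j \<subseteq> Q" for j
    using t_ideal by (auto simp: ideal_on_def)
  have K_S: "K \<subseteq> S" and "0 \<in> K"
    using K(2) subspace_0 by (auto simp: ideal_on_def)
  have s1: "?s 1 = K"
    using t0 p_0 K_S by auto
  have "?s j \<subset> ?s (Suc j)" if j: "j < Suc r" for j
  proof (cases j)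
    case 0
    then show ?thesis
      using s1 K(1) \<open>0 \<in> K\<close> by auto
  next
    case (Suc i)
    obtain y where "y \<in> t (Suc i)" "y \<notin> t i"
      using t_strict[of i] j Suc by blast
    moreover have "t (Suc i) \<subseteq> p ` S"
      using t_Q[of "Suc i"] j Suc p_S by simp
    ultimately show ?thesis
      using t_strict[of i] j Suc by auto
  qed
  moreover have "ideal_on S br (?s j) \<and> J ` ?s j \<subseteq> ?s j" if "j \<le> Suc r" for j
    using that ideal_on_zero ideal_on_preimage[OF p] t_ideal by (cases j) auto
  moreover have "aff_factor (?s j) (?s (j - 1)) br J" if "j \<in> {1..Suc r}" for j
  proof (cases "j = 1")
    case True
    then show ?thesis
      using s1 K(3) by simp
  next
    case False
    define i where "i = j - 2"
    have i: "j = Suc (Suc i)" "i < r"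
      using that False by (auto simp: i_def)
    have "aff_factor (t (Suc i)) (t i) brQ JQ" "t (Suc i) \<subseteq> Q"
      using t_factor[of "Suc i"] t_Q[of "Suc i"] i(2) by simp_all
    then show ?thesis
      using aff_factor_preimage[OF p] i(1) by simp
  qed
  ultimately show ?thesis
    using tr p_S by (auto simp: aff_series_def)
qed

end

lemma aff_series_exists:
  fixes S :: "'a::euclidean_space set"
  assumes "lie_algebra_on S br" "abelian_cs_on S br J"
  shows "\<exists>r s. aff_series S br J r s"
  using assms
proof (induction "dim S" arbitrary: S br J rule: less_induct)
  case less
  have acl: "abelian_complex_lie S br J"
    using less.prems by unfold_locales
  interpret abelian_complex_lie S br J
    by (rule acl)
  show ?case
  proof (cases "S = {0}")
    case True
    then have "aff_series S br J 0 (\<lambda>_. {0})"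
      using ideal_on_zero by (auto simp: aff_series_def)
    then show ?thesis
      by blast
  next
    case False
    obtain K where K: "K \<noteq> {0}" "ideal_on S br K" "J ` K \<subseteq> K" "aff_factor K {0} br J"
      using exists_aff_ideal[OF False] by blast
    obtain p where p: "linear p" "\<And>x. x - p x \<in> K" "\<And>x. x \<in> K \<Longrightarrow> p x = 0"
      using complement_projection_exists K(2) by (metis ideal_on_def)
    interpret Q: abelian_complex_lie_quotient S br J K p
      by (intro abelian_complex_lie_quotient.intro acl abelian_complex_lie_quotient_axioms.intro K(2,3) p)
    have "span Q.quot = Q.quot" "span S = S"
      using Q.lie_algebra_on_quot subspace_carrier by (simp_all add: lie_algebra_on_def)
    then have "dim Q.quot < dim S"
      using Q.quot_psubset[OF K(1)] dim_psubset by metis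
    then obtain r t where "aff_series Q.quot Q.quot_br Q.quot_J r t"
      using less.hyps Q.lie_algebra_on_quot Q.abelian_cs_on_quot by blast
    then show ?thesis
      using aff_series_lift[OF Q.hol_quot_iso_quot K(1,2,4)] by blast
  qed
qed

theorem mainTheorem1:
  fixes br :: "'a::euclidean_space \<Rightarrow> 'a \<Rightarrow> 'a" and J :: "'a \<Rightarrow> 'a"
  assumes "lie_algebra_on UNIV br"
    and "abelian_cs_on UNIV br J"
  shows "\<exists>(r::nat) (s::nat \<Rightarrow> 'a set).
           s 0 = {0} \<and> s r = UNIV \<and>
           (\<forall>j<r. s j \<subset> s (Suc j)) \<and>
           (\<forall>j\<le>r. ideal_on UNIV br (s j) \<and> J ` s j \<subseteq> s j) \<and>
           (\<forall>j\<in>{1..r}. \<exists>(H::'a set) brH JH (A::'a set) m f.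
              lie_algebra_on H brH \<and> abelian_cs_on H brH JH \<and>
              comm_assoc_alg_on A m \<and>
              central_ext_of_aff H brH JH A m \<and>
              hol_quot_iso (s j) (s (j - 1)) br J H brH JH f)"
  using aff_series_exists[OF assms] by (simp add: aff_series_def aff_factor_def)

end
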